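(* Let $R$ be a commutative ring with identity and $M$ an $R$-module; for $a\in R$ let $\mathfrak{a}=aR$. The following statements are equivalent: (1) $M$ is reduced; (2) $a\Gamma_{a}(M)=0$ for all $a\in R$; (3) $(0:_M a)=(0:_M a^{k})$ for all $a\in R$ and all $k\in\mathbb{Z}^{+}$; (4) $\varinjlim_{k}\operatorname{Hom}_R(R/\mathfrak{a}^{k},M)\cong \operatorname{Hom}_R(R/\mathfrak{a},M)$ for all $a\in R$; (5) $\Gamma_{a}(M)\cong \operatorname{Hom}_R(R/\mathfrak{a},M)$ for all $a\in R$; (6) for all $a\in R$, $0\to \Gamma_{a}(M)\to M\to aM\to 0$ is a short exact sequence, where the first map is the inclusion and the second is $m\mapsto am$.
   Context: All rings are commutative with identity. For an $R$-module $M$ and $a\in R$: $M$ is $a$-reduced if for all $m\in M$, $a^{2}m=0$ implies $am=0$; $M$ is reduced if it is $a$-reduced for every $a\in R$. $\Gamma_{a}(M)=\{m\in M \mid a^{k}m=0 \text{ for some } k\in\mathbb{Z}^{+}\}$, $a\Gamma_{a}(M)=\{am \mid m\in \Gamma_a(M)\}$, and $(0:_M a^{k})=\{m\in M\mid a^{k}m=0\}$. *)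

theory Defs
  imports Complex_Main
begin

text \<open>R is the whole type 'a :: comm_ring_1, M the whole type 'm :: ab_group_add with an
  R-module scalar multiplication scale (Main's locale module).\<close>

definition a_reduced :: "('a::comm_ring_1 \<Rightarrow> 'm::ab_group_add \<Rightarrow> 'm) \<Rightarrow> 'a \<Rightarrow> bool" where
  "a_reduced scale a \<longleftrightarrow> (\<forall>m. scale (a^2) m = 0 \<longrightarrow> scale a m = 0)"

definition reduced :: "('a::comm_ring_1 \<Rightarrow> 'm::ab_group_add \<Rightarrow> 'm) \<Rightarrow> bool" where
  "reduced scale \<longleftrightarrow> (\<forall>a. a_reduced scale a)"

definition Gamma :: "('a::comm_ring_1 \<Rightarrow> 'm::ab_group_add \<Rightarrow> 'm) \<Rightarrow> 'a \<Rightarrow> 'm set" where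
  "Gamma scale a = {m. \<exists>k::nat. k > 0 \<and> scale (a^k) m = 0}"

definition ann :: "('a::comm_ring_1 \<Rightarrow> 'm::ab_group_add \<Rightarrow> 'm) \<Rightarrow> 'a \<Rightarrow> 'm set" where
  "ann scale b = {m. scale b m = 0}"

definition smul_set :: "('a::comm_ring_1 \<Rightarrow> 'm::ab_group_add \<Rightarrow> 'm) \<Rightarrow> 'a \<Rightarrow> 'm set \<Rightarrow> 'm set" where
  "smul_set scale b N = {scale b n | n. n \<in> N}"

definition pideal :: "'a::comm_ring_1 \<Rightarrow> 'a set" where
  "pideal b = {b * r | r. True}"

text \<open>Hom_R(R/I, M), realised (via the universal property of the quotient R -> R/I) as the
  R-linear maps R -> M vanishing on I; module operations are pointwise.\<close>
definition HomQ :: "('a::comm_ring_1 \<Rightarrow> 'm::ab_group_add \<Rightarrow> 'm) \<Rightarrow> 'a set \<Rightarrow> ('a \<Rightarrow> 'm) set" where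
  "HomQ scale I = {f. module_hom ((*)) scale f \<and> (\<forall>x\<in>I. f x = 0)}"

definition hom_add :: "('a \<Rightarrow> 'm::ab_group_add) \<Rightarrow> ('a \<Rightarrow> 'm) \<Rightarrow> ('a \<Rightarrow> 'm)" where
  "hom_add f g = (\<lambda>x. f x + g x)"

definition hom_scale :: "('r \<Rightarrow> 'm \<Rightarrow> 'm) \<Rightarrow> 'r \<Rightarrow> ('a \<Rightarrow> 'm) \<Rightarrow> ('a \<Rightarrow> 'm)" where
  "hom_scale scale r f = (\<lambda>x. scale r (f x))"

definition mod_iso ::
  "('b \<Rightarrow> 'b \<Rightarrow> 'b) \<Rightarrow> ('r \<Rightarrow> 'b \<Rightarrow> 'b) \<Rightarrow> 'b set \<Rightarrow>
   ('c \<Rightarrow> 'c \<Rightarrow> 'c) \<Rightarrow> ('r \<Rightarrow> 'c \<Rightarrow> 'c) \<Rightarrow> 'c set \<Rightarrow> bool" where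
  "mod_iso add1 s1 S add2 s2 T \<longleftrightarrow>
     (\<exists>f. bij_betw f S T \<and> (\<forall>x\<in>S. \<forall>y\<in>S. f (add1 x y) = add2 (f x) (f y))
          \<and> (\<forall>r. \<forall>x\<in>S. f (s1 r x) = s2 r (f x)))"

text \<open>Direct limit of a nat-indexed direct system of modules C 0 -> C 1 -> ... with transition
  maps phi i : C i -> C (Suc i), all living in a common type 'b with operations add, s.\<close>
fun dl_tr :: "(nat \<Rightarrow> 'b \<Rightarrow> 'b) \<Rightarrow> nat \<Rightarrow> nat \<Rightarrow> 'b \<Rightarrow> 'b" where
  "dl_tr phi i 0 x = x"
| "dl_tr phi i (Suc d) x = phi (i + d) (dl_tr phi i d x)"

definition dl_rel :: "(nat \<Rightarrow> 'b set) \<Rightarrow> (nat \<Rightarrow> 'b \<Rightarrow> 'b) \<Rightarrow> ((nat \<times> 'b) \<times> (nat \<times> 'b)) set" where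
  "dl_rel C phi = {((i, x), (j, y)). x \<in> C i \<and> y \<in> C j \<and>
      (\<exists>n. i \<le> n \<and> j \<le> n \<and> dl_tr phi i (n - i) x = dl_tr phi j (n - j) y)}"

definition dl_carrier :: "(nat \<Rightarrow> 'b set) \<Rightarrow> (nat \<Rightarrow> 'b \<Rightarrow> 'b) \<Rightarrow> (nat \<times> 'b) set set" where
  "dl_carrier C phi = (SIGMA i:UNIV. C i) // dl_rel C phi"

definition dl_add :: "('b \<Rightarrow> 'b \<Rightarrow> 'b) \<Rightarrow> (nat \<Rightarrow> 'b set) \<Rightarrow> (nat \<Rightarrow> 'b \<Rightarrow> 'b)
    \<Rightarrow> (nat \<times> 'b) set \<Rightarrow> (nat \<times> 'b) set \<Rightarrow> (nat \<times> 'b) set" where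
  "dl_add add C phi X Y = (SOME Z. \<exists>i x j y. (i, x) \<in> X \<and> (j, y) \<in> Y \<and>
      Z = dl_rel C phi `` {(max i j, add (dl_tr phi i (max i j - i) x) (dl_tr phi j (max i j - j) y))})"

definition dl_scale :: "('r \<Rightarrow> 'b \<Rightarrow> 'b) \<Rightarrow> (nat \<Rightarrow> 'b set) \<Rightarrow> (nat \<Rightarrow> 'b \<Rightarrow> 'b)
    \<Rightarrow> 'r \<Rightarrow> (nat \<times> 'b) set \<Rightarrow> (nat \<times> 'b) set" where
  "dl_scale s C phi r X = (SOME Z. \<exists>i x. (i, x) \<in> X \<and> Z = dl_rel C phi `` {(i, s r x)})"

text \<open>The direct system k \<mapsto> Hom_R(R/a^k R, M), k = 1, 2, ... (index i stands for k = i+1).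
  The transition map Hom(R/a^k,M) -> Hom(R/a^(k+1),M) is precomposition with the projection
  R/a^(k+1) -> R/a^k, which in the above model of Hom(R/I,M) is the identity on maps R -> M.\<close>
definition HomSys :: "('a::comm_ring_1 \<Rightarrow> 'm::ab_group_add \<Rightarrow> 'm) \<Rightarrow> 'a \<Rightarrow> nat \<Rightarrow> ('a \<Rightarrow> 'm) set" where
  "HomSys scale a i = HomQ scale (pideal (a ^ Suc i))"

definition HomSys_tr :: "nat \<Rightarrow> ('a \<Rightarrow> 'm) \<Rightarrow> ('a \<Rightarrow> 'm)" where
  "HomSys_tr i f = (\<lambda>x. f x)"

definition short_exact :: "'x set \<Rightarrow> 'y::zero set \<Rightarrow> 'z::zero set \<Rightarrow> ('x \<Rightarrow> 'y) \<Rightarrow> ('y \<Rightarrow> 'z) \<Rightarrow> bool" where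
  "short_exact A B C f g \<longleftrightarrow> f ` A \<subseteq> B \<and> g ` B \<subseteq> C \<and> inj_on f A \<and>
     f ` A = {b \<in> B. g b = 0} \<and> g ` B = C"

end

theory Submission
  imports Defs
begin

text \<open>For a fixed \<open>a\<close>, each of the conditions is equivalent to \<open>\<Gamma>\<^sub>a(M) = (0 :\<^sub>M a)\<close>,
  and so is \<open>a\<close>-reducedness (if \<open>a\<^sup>k\<^sup>+\<^sup>2 m = 0\<close> then \<open>a\<^sup>2\<close> kills \<open>a\<^sup>k m\<close>, so already
  \<open>a\<^sup>k\<^sup>+\<^sup>1 m = 0\<close>). The map \<open>m \<mapsto> (r \<mapsto> r m)\<close> identifies \<open>Hom\<^sub>R(R/bR, M)\<close> with
  \<open>(0 :\<^sub>M b)\<close>; hence the direct system \<open>Hom\<^sub>R(R/a\<^sup>kR, M)\<close> is the chain \<open>(0 :\<^sub>M a\<^sup>k)\<close>,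
  whose direct limit is \<open>\<Gamma>\<^sub>a(M)\<close>. Conversely, an isomorphism
  \<open>\<Gamma>\<^sub>a(M) \<cong> Hom\<^sub>R(R/aR, M)\<close> forces \<open>a \<Gamma>\<^sub>a(M) = 0\<close>, since \<open>a\<close> kills the target.\<close>

lemma mod_iso_trans:
  assumes "mod_iso add1 s1 S add2 s2 T" and "mod_iso add2 s2 T add3 s3 U"
  shows "mod_iso add1 s1 S add3 s3 U"
proof -
  obtain f where f: "bij_betw f S T" "\<forall>x\<in>S. \<forall>y\<in>S. f (add1 x y) = add2 (f x) (f y)"
    "\<forall>r. \<forall>x\<in>S. f (s1 r x) = s2 r (f x)"
    using assms(1) unfolding mod_iso_def by blast
  obtain g where g: "bij_betw g T U" "\<forall>x\<in>T. \<forall>y\<in>T. g (add2 x y) = add3 (g x) (g y)"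
    "\<forall>r. \<forall>x\<in>T. g (s2 r x) = s3 r (g x)"
    using assms(2) unfolding mod_iso_def by blast
  have "f x \<in> T" if "x \<in> S" for x
    using f(1) that by (rule bij_betw_apply)
  then have "bij_betw (g \<circ> f) S U"
    and "\<forall>x\<in>S. \<forall>y\<in>S. (g \<circ> f) (add1 x y) = add3 ((g \<circ> f) x) ((g \<circ> f) y)"
    and "\<forall>r. \<forall>x\<in>S. (g \<circ> f) (s1 r x) = s3 r ((g \<circ> f) x)"
    using f g by (auto intro: bij_betw_trans)
  then show ?thesis
    unfolding mod_iso_def by blast
qed

lemma mod_iso_sym:
  assumes iso: "mod_iso add1 s1 S add2 s2 T"
    and add_closed: "\<And>x y. x \<in> S \<Longrightarrow> y \<in> S \<Longrightarrow> add1 x y \<in> S"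
    and scale_closed: "\<And>r x. x \<in> S \<Longrightarrow> s1 r x \<in> S"
  shows "mod_iso add2 s2 T add1 s1 S"
proof -
  obtain f where bij: "bij_betw f S T"
    and add: "\<forall>x\<in>S. \<forall>y\<in>S. f (add1 x y) = add2 (f x) (f y)"
    and scale: "\<forall>r. \<forall>x\<in>S. f (s1 r x) = s2 r (f x)"
    using iso unfolding mod_iso_def by blast
  define g where "g = inv_into S f"
  have g_into: "g y \<in> S" and f_g: "f (g y) = y" if "y \<in> T" for y
    using that bij unfolding g_def bij_betw_def by (auto intro: inv_into_into f_inv_into_f)
  have g_f: "g (f x) = x" if "x \<in> S" for x
    using that bij unfolding g_def bij_betw_def by (simp add: inv_into_f_f)
  have "g (add2 x y) = add1 (g x) (g y)" if "x \<in> T" "y \<in> T" for x y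
    using add g_into f_g g_f add_closed that by metis
  moreover have "g (s2 r x) = s1 r (g x)" if "x \<in> T" for r x
    using scale g_into f_g g_f scale_closed that by metis
  moreover have "bij_betw g T S"
    unfolding g_def by (rule bij_betw_inv_into[OF bij])
  ultimately show ?thesis
    unfolding mod_iso_def by blast
qed

text \<open>Writing \<open>s a y = s 0 y\<close> for \<open>a y = 0\<close> avoids naming the zero of \<open>T\<close>.\<close>
lemma mod_iso_scale_eq:
  assumes iso: "mod_iso add1 s1 S add2 s2 T"
    and scale_closed: "\<And>r x. x \<in> S \<Longrightarrow> s1 r x \<in> S"
    and killed: "\<And>y. y \<in> T \<Longrightarrow> s2 a y = s2 0 y"
    and x: "x \<in> S"
  shows "s1 a x = s1 0 x"
proof -
  obtain f where bij: "bij_betw f S T" and scale: "\<forall>r. \<forall>x\<in>S. f (s1 r x) = s2 r (f x)"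
    using iso unfolding mod_iso_def by blast
  have "f (s1 a x) = f (s1 0 x)"
    using scale killed x bij_betw_apply[OF bij x] by metis
  then show ?thesis
    using bij scale_closed[OF x] unfolding bij_betw_def inj_on_def by blast
qed

definition dl_class :: "(nat \<Rightarrow> 'b set) \<Rightarrow> 'b \<Rightarrow> (nat \<times> 'b) set" where
  "dl_class C x = {(j, x) | j. x \<in> C j}"

context
  fixes C :: "nat \<Rightarrow> 'b set" and phi :: "nat \<Rightarrow> 'b \<Rightarrow> 'b"
  assumes phi_id: "\<And>i x. phi i x = x"
begin

lemma dl_tr_id: "dl_tr phi i d x = x"
  by (induction d) (simp_all add: phi_id)

lemma dl_rel_Image: "dl_rel C phi `` {(j, x)} = (if x \<in> C j then dl_class C x else {})"
  unfolding dl_rel_def dl_class_def by (auto simp: dl_tr_id) (metis le_cases order_refl)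

lemma dl_carrier_eq: "dl_carrier C phi = dl_class C ` (\<Union>i. C i)"
  unfolding dl_carrier_def quotient_def by (auto simp: dl_rel_Image) blast+

lemma inj_on_dl_class: "inj_on (dl_class C) (\<Union>i. C i)"
  unfolding inj_on_def dl_class_def by blast

lemma dl_scale_class:
  assumes scale_closed: "\<And>i r x. x \<in> C i \<Longrightarrow> s r x \<in> C i" and x: "x \<in> C i"
  shows "dl_scale s C phi r (dl_class C x) = dl_class C (s r x)"
  unfolding dl_scale_def
proof (rule someI2_ex)
  show "\<exists>Z i' x'. (i', x') \<in> dl_class C x \<and> Z = dl_rel C phi `` {(i', s r x')}"
    using x unfolding dl_class_def by blast
next
  fix Z assume "\<exists>i' x'. (i', x') \<in> dl_class C x \<and> Z = dl_rel C phi `` {(i', s r x')}"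
  then show "Z = dl_class C (s r x)"
    using scale_closed unfolding dl_rel_Image by (auto simp: dl_class_def)
qed

lemma dl_add_class:
  assumes mono: "\<And>i j. i \<le> j \<Longrightarrow> C i \<subseteq> C j"
    and add_closed: "\<And>i x y. x \<in> C i \<Longrightarrow> y \<in> C i \<Longrightarrow> add x y \<in> C i"
    and x: "x \<in> C i" and y: "y \<in> C j"
  shows "dl_add add C phi (dl_class C x) (dl_class C y) = dl_class C (add x y)"
  unfolding dl_add_def dl_tr_id
proof (rule someI2_ex)
  show "\<exists>Z i' x' j' y'. (i', x') \<in> dl_class C x \<and> (j', y') \<in> dl_class C y \<and>
      Z = dl_rel C phi `` {(max i' j', add x' y')}"
    using x y unfolding dl_class_def by blast
next
  fix Z assume "\<exists>i' x' j' y'. (i', x') \<in> dl_class C x \<and> (j', y') \<in> dl_class C y \<and>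
      Z = dl_rel C phi `` {(max i' j', add x' y')}"
  then obtain i' j' where "x \<in> C i'" "y \<in> C j'" "Z = dl_rel C phi `` {(max i' j', add x y)}"
    unfolding dl_class_def by blast
  moreover have "C i' \<subseteq> C (max i' j')" "C j' \<subseteq> C (max i' j')"
    by (simp_all add: mono)
  ultimately have "add x y \<in> C (max i' j')"
    using add_closed by blast
  then show "Z = dl_class C (add x y)"
    using \<open>Z = _\<close> unfolding dl_rel_Image by simp
qed

lemma mod_iso_UN_dl_carrier:
  assumes mono: "\<And>i j. i \<le> j \<Longrightarrow> C i \<subseteq> C j"
    and add_closed: "\<And>i x y. x \<in> C i \<Longrightarrow> y \<in> C i \<Longrightarrow> add x y \<in> C i"
    and scale_closed: "\<And>i r x. x \<in> C i \<Longrightarrow> s r x \<in> C i"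
  shows "mod_iso add s (\<Union>i. C i) (dl_add add C phi) (dl_scale s C phi) (dl_carrier C phi)"
  unfolding mod_iso_def
proof (intro exI conjI ballI allI)
  show "bij_betw (dl_class C) (\<Union>i. C i) (dl_carrier C phi)"
    unfolding bij_betw_def dl_carrier_eq by (simp add: inj_on_dl_class)
next
  fix x y assume "x \<in> (\<Union>i. C i)" "y \<in> (\<Union>i. C i)"
  then show "dl_class C (add x y) = dl_add add C phi (dl_class C x) (dl_class C y)"
    using dl_add_class[where add = add, OF mono add_closed] by blast
next
  fix r x assume "x \<in> (\<Union>i. C i)"
  then show "dl_class C (s r x) = dl_scale s C phi r (dl_class C x)"
    using dl_scale_class[where s = s, OF scale_closed] by blast
qed

end

lemma module_times: "module ((*) :: 'a::comm_ring_1 \<Rightarrow> 'a \<Rightarrow> 'a)"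
  by unfold_locales (simp_all add: algebra_simps)

definition elem_hom :: "('a \<Rightarrow> 'm \<Rightarrow> 'm) \<Rightarrow> 'm \<Rightarrow> 'a \<Rightarrow> 'm" where
  "elem_hom scale m = (\<lambda>r. scale r m)"

context module
begin

lemma hom_add_elem_hom: "hom_add (elem_hom scale m) (elem_hom scale n) = elem_hom scale (m + n)"
  by (simp add: hom_add_def elem_hom_def scale_right_distrib)

lemma hom_scale_elem_hom: "hom_scale scale r (elem_hom scale m) = elem_hom scale (r *s m)"
  by (simp add: hom_scale_def elem_hom_def mult.commute)

lemma inj_elem_hom: "inj (elem_hom scale)"
  by (rule injI) (metis elem_hom_def scale_one)

lemma mod_iso_elem_hom: "mod_iso (+) scale N hom_add (hom_scale scale) (elem_hom scale ` N)"
  unfolding mod_iso_def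
  by (intro exI[of _ "elem_hom scale"])
     (simp add: bij_betw_def inj_on_subset[OF inj_elem_hom] hom_add_elem_hom hom_scale_elem_hom)

lemma HomQ_pideal: "HomQ scale (pideal b) = elem_hom scale ` ann scale b"
proof (intro set_eqI iffI)
  fix f assume "f \<in> HomQ scale (pideal b)"
  then have hom: "module_hom (*) scale f" and vanish: "\<forall>x\<in>pideal b. f x = 0"
    by (simp_all add: HomQ_def)
  have f_eq: "f = elem_hom scale (f 1)"
  proof
    fix x
    show "f x = elem_hom scale (f 1) x"
      using module_hom.scale[OF hom, of x 1] by (simp add: elem_hom_def)
  qed
  have "b \<in> pideal b"
    unfolding pideal_def by (auto intro: exI[of _ 1])
  then have "b *s f 1 = 0"
    using vanish f_eq unfolding elem_hom_def by metis
  then show "f \<in> elem_hom scale ` ann scale b"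
    using f_eq by (auto simp: ann_def)
next
  fix f assume "f \<in> elem_hom scale ` ann scale b"
  then obtain m where f: "f = elem_hom scale m" and m: "b *s m = 0"
    by (auto simp: ann_def)
  have "module_hom (*) scale f"
    unfolding module_hom_iff f elem_hom_def
    by (simp add: module_times module_axioms scale_left_distrib)
  moreover have "f x = 0" if x: "x \<in> pideal b" for x
  proof -
    obtain r where "x = b * r"
      using x by (auto simp: pideal_def)
    then have "f x = r *s (b *s m)"
      by (simp add: f elem_hom_def mult.commute)
    then show ?thesis
      using m by simp
  qed
  ultimately show "f \<in> HomQ scale (pideal b)"
    by (simp add: HomQ_def)
qed

lemma subspace_ann: "subspace (ann scale b)"
proof (rule subspaceI)
  show "0 \<in> ann scale b"
    by (simp add: ann_def)
  show "x + y \<in> ann scale b" if "x \<in> ann scale b" "y \<in> ann scale b" for x y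
    using that by (simp add: ann_def scale_right_distrib)
  show "c *s x \<in> ann scale b" if "x \<in> ann scale b" for c x
  proof -
    have "b *s c *s x = c *s b *s x"
      by (rule scale_left_commute)
    also have "\<dots> = 0"
      using that by (simp add: ann_def)
    finally show ?thesis
      by (simp add: ann_def)
  qed
qed

lemma ann_power_mono:
  assumes "i \<le> j"
  shows "ann scale (a ^ i) \<subseteq> ann scale (a ^ j)"
proof -
  have "a ^ j = a ^ (j - i) * a ^ i"
    using assms by (simp flip: power_add)
  then show ?thesis
    by (auto simp: ann_def simp flip: scale_scale)
qed

lemma Gamma_eq_UN_ann: "Gamma scale a = (\<Union>i. ann scale (a ^ Suc i))"
  unfolding Gamma_def ann_def by (auto simp: gr0_conv_Suc)

lemma ann_subset_Gamma: "ann scale a \<subseteq> Gamma scale a"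
  unfolding Gamma_def ann_def by (auto intro: exI[of _ 1])

lemma subspace_Gamma: "subspace (Gamma scale a)"
proof (rule subspaceI)
  show "0 \<in> Gamma scale a"
    unfolding Gamma_eq_UN_ann using subspace_0[OF subspace_ann] by blast
next
  fix x y assume "x \<in> Gamma scale a" "y \<in> Gamma scale a"
  then obtain i j where "x \<in> ann scale (a ^ Suc i)" "y \<in> ann scale (a ^ Suc j)"
    unfolding Gamma_eq_UN_ann by blast
  then have "x \<in> ann scale (a ^ Suc (max i j))" "y \<in> ann scale (a ^ Suc (max i j))"
    using ann_power_mono[of "Suc i" "Suc (max i j)" a] ann_power_mono[of "Suc j" "Suc (max i j)" a]
    by auto
  then show "x + y \<in> Gamma scale a"
    unfolding Gamma_eq_UN_ann using subspace_add[OF subspace_ann] by blast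
next
  fix c x assume "x \<in> Gamma scale a"
  then show "c *s x \<in> Gamma scale a"
    unfolding Gamma_eq_UN_ann using subspace_scale[OF subspace_ann] by blast
qed

lemma UN_HomSys: "(\<Union>i. HomSys scale a i) = elem_hom scale ` Gamma scale a"
  by (simp add: HomSys_def HomQ_pideal Gamma_eq_UN_ann image_UN)

lemma mod_iso_Gamma_dl_carrier:
  "mod_iso (+) scale (Gamma scale a)
     (dl_add hom_add (HomSys scale a) HomSys_tr)
     (dl_scale (hom_scale scale) (HomSys scale a) HomSys_tr)
     (dl_carrier (HomSys scale a) HomSys_tr)"
proof (rule mod_iso_trans)
  show "mod_iso (+) scale (Gamma scale a) hom_add (hom_scale scale) (\<Union>i. HomSys scale a i)"
    unfolding UN_HomSys by (rule mod_iso_elem_hom)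
  show "mod_iso hom_add (hom_scale scale) (\<Union>i. HomSys scale a i)
     (dl_add hom_add (HomSys scale a) HomSys_tr)
     (dl_scale (hom_scale scale) (HomSys scale a) HomSys_tr)
     (dl_carrier (HomSys scale a) HomSys_tr)"
  proof (rule mod_iso_UN_dl_carrier)
    show "HomSys_tr i f = f" for i and f :: "'a \<Rightarrow> 'b"
      by (simp add: HomSys_tr_def)
    show "HomSys scale a i \<subseteq> HomSys scale a j" if "i \<le> j" for i j
      using that ann_power_mono[of "Suc i" "Suc j" a] by (simp add: HomSys_def HomQ_pideal image_mono)
    show "hom_add f g \<in> HomSys scale a i" if "f \<in> HomSys scale a i" "g \<in> HomSys scale a i" for i f g
      using that subspace_add[OF subspace_ann]
      by (auto simp: HomSys_def HomQ_pideal hom_add_elem_hom)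
    show "hom_scale scale r f \<in> HomSys scale a i" if "f \<in> HomSys scale a i" for i r f
      using that subspace_scale[OF subspace_ann]
      by (auto simp: HomSys_def HomQ_pideal hom_scale_elem_hom)
  qed
qed

lemma a_reduced_iff_Gamma_eq_ann: "a_reduced scale a \<longleftrightarrow> Gamma scale a = ann scale a"
proof
  assume red: "a_reduced scale a"
  have "a *s m = 0" if "a ^ Suc k *s m = 0" for k m
    using that
  proof (induction k)
    case 0
    then show ?case by simp
  next
    case (Suc k)
    have "a ^ 2 *s a ^ k *s m = a ^ Suc (Suc k) *s m"
      by (simp add: power2_eq_square mult.assoc)
    then have "a *s a ^ k *s m = 0"
      using red Suc.prems unfolding a_reduced_def by metis
    then show ?case
      by (intro Suc.IH) simp
  qed
  then have "Gamma scale a \<subseteq> ann scale a"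
    unfolding Gamma_eq_UN_ann ann_def by blast
  then show "Gamma scale a = ann scale a"
    using ann_subset_Gamma by blast
next
  assume Gamma_eq: "Gamma scale a = ann scale a"
  show "a_reduced scale a"
    unfolding a_reduced_def
  proof (intro allI impI)
    fix m assume "a ^ 2 *s m = 0"
    then have "m \<in> Gamma scale a"
      unfolding Gamma_def by (auto intro: exI[of _ 2])
    then show "a *s m = 0"
      using Gamma_eq by (simp add: ann_def)
  qed
qed

lemma smul_set_Gamma_eq_zero_iff:
  "smul_set scale a (Gamma scale a) = {0} \<longleftrightarrow> Gamma scale a = ann scale a"
proof
  assume "smul_set scale a (Gamma scale a) = {0}"
  then have "Gamma scale a \<subseteq> ann scale a"
    unfolding smul_set_def ann_def by blast
  then show "Gamma scale a = ann scale a"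
    using ann_subset_Gamma by blast
next
  assume "Gamma scale a = ann scale a"
  then have "a *s m = 0" if "m \<in> Gamma scale a" for m
    using that by (simp add: ann_def)
  moreover have "0 \<in> Gamma scale a"
    by (rule subspace_0[OF subspace_Gamma])
  ultimately show "smul_set scale a (Gamma scale a) = {0}"
    unfolding smul_set_def by force
qed

lemma ann_eq_ann_power_iff:
  "(\<forall>k::nat. k > 0 \<longrightarrow> ann scale a = ann scale (a ^ k)) \<longleftrightarrow> Gamma scale a = ann scale a"
proof
  assume ann_eq: "\<forall>k::nat. k > 0 \<longrightarrow> ann scale a = ann scale (a ^ k)"
  have "m \<in> ann scale a" if m: "m \<in> Gamma scale a" for m
  proof -
    obtain k :: nat where "k > 0" and "m \<in> ann scale (a ^ k)"
      using m unfolding Gamma_def ann_def by blast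
    then show ?thesis
      using ann_eq by simp
  qed
  then have "Gamma scale a \<subseteq> ann scale a"
    by blast
  then show "Gamma scale a = ann scale a"
    using ann_subset_Gamma by blast
next
  assume Gamma_eq: "Gamma scale a = ann scale a"
  show "\<forall>k::nat. k > 0 \<longrightarrow> ann scale a = ann scale (a ^ k)"
  proof (intro allI impI)
    fix k :: nat assume "k > 0"
    have "ann scale a \<subseteq> ann scale (a ^ k)"
      using ann_power_mono[of 1 k a] \<open>k > 0\<close> by simp
    moreover have "ann scale (a ^ k) \<subseteq> Gamma scale a"
      using \<open>k > 0\<close> unfolding Gamma_def ann_def by blast
    ultimately show "ann scale a = ann scale (a ^ k)"
      unfolding Gamma_eq by (rule subset_antisym)
  qed
qed

lemma short_exact_Gamma_iff:
  "short_exact (Gamma scale a) (UNIV :: 'b set) (smul_set scale a UNIV) (\<lambda>m. m) (\<lambda>m. a *s m)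
     \<longleftrightarrow> Gamma scale a = ann scale a"
  using ann_subset_Gamma unfolding short_exact_def smul_set_def ann_def by auto

lemma mod_iso_Gamma_HomQ_iff:
  "mod_iso (+) scale (Gamma scale a) hom_add (hom_scale scale) (HomQ scale (pideal a))
     \<longleftrightarrow> Gamma scale a = ann scale a"
proof
  assume iso: "mod_iso (+) scale (Gamma scale a) hom_add (hom_scale scale) (HomQ scale (pideal a))"
  have "hom_scale scale a f = hom_scale scale 0 f" if "f \<in> HomQ scale (pideal a)" for f
    using that by (auto simp: HomQ_pideal hom_scale_elem_hom ann_def)
  then have "a *s m = 0 *s m" if "m \<in> Gamma scale a" for m
    using mod_iso_scale_eq[OF iso subspace_scale[OF subspace_Gamma]] that by blast
  then have "Gamma scale a \<subseteq> ann scale a"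
    by (auto simp: ann_def)
  then show "Gamma scale a = ann scale a"
    using ann_subset_Gamma by blast
next
  assume "Gamma scale a = ann scale a"
  then show "mod_iso (+) scale (Gamma scale a) hom_add (hom_scale scale) (HomQ scale (pideal a))"
    by (simp add: HomQ_pideal mod_iso_elem_hom)
qed

lemma mod_iso_dl_carrier_iff:
  "mod_iso (dl_add hom_add (HomSys scale a) HomSys_tr)
       (dl_scale (hom_scale scale) (HomSys scale a) HomSys_tr)
       (dl_carrier (HomSys scale a) HomSys_tr) add s T
     \<longleftrightarrow> mod_iso (+) scale (Gamma scale a) add s T"
proof
  assume "mod_iso (dl_add hom_add (HomSys scale a) HomSys_tr)
       (dl_scale (hom_scale scale) (HomSys scale a) HomSys_tr)
       (dl_carrier (HomSys scale a) HomSys_tr) add s T"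
  then show "mod_iso (+) scale (Gamma scale a) add s T"
    by (rule mod_iso_trans[OF mod_iso_Gamma_dl_carrier])
next
  assume "mod_iso (+) scale (Gamma scale a) add s T"
  moreover have "mod_iso (dl_add hom_add (HomSys scale a) HomSys_tr)
       (dl_scale (hom_scale scale) (HomSys scale a) HomSys_tr)
       (dl_carrier (HomSys scale a) HomSys_tr) (+) scale (Gamma scale a)"
    using mod_iso_Gamma_dl_carrier subspace_add[OF subspace_Gamma] subspace_scale[OF subspace_Gamma]
    by (rule mod_iso_sym)
  ultimately show "mod_iso (dl_add hom_add (HomSys scale a) HomSys_tr)
       (dl_scale (hom_scale scale) (HomSys scale a) HomSys_tr)
       (dl_carrier (HomSys scale a) HomSys_tr) add s T"
    by (rule mod_iso_trans[rotated])
qed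

end

theorem mainTheorem2:
  fixes scale :: "'a::comm_ring_1 \<Rightarrow> 'm::ab_group_add \<Rightarrow> 'm"
  assumes "module scale"
  shows "(reduced scale \<longleftrightarrow> (\<forall>a. smul_set scale a (Gamma scale a) = {0}))
       \<and> (reduced scale \<longleftrightarrow> (\<forall>a. \<forall>k::nat. k > 0 \<longrightarrow> ann scale a = ann scale (a ^ k)))
       \<and> (reduced scale \<longleftrightarrow> (\<forall>a. mod_iso
              (dl_add hom_add (HomSys scale a) HomSys_tr)
              (dl_scale (hom_scale scale) (HomSys scale a) HomSys_tr)
              (dl_carrier (HomSys scale a) HomSys_tr)
              hom_add (hom_scale scale) (HomQ scale (pideal a))))
       \<and> (reduced scale \<longleftrightarrow> (\<forall>a. mod_iso (+) scale (Gamma scale a)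
              hom_add (hom_scale scale) (HomQ scale (pideal a))))
       \<and> (reduced scale \<longleftrightarrow> (\<forall>a. short_exact (Gamma scale a) (UNIV :: 'm set)
              (smul_set scale a UNIV) (\<lambda>m. m) (\<lambda>m. scale a m)))"
proof -
  interpret module scale by fact
  have "reduced scale \<longleftrightarrow> (\<forall>a. Gamma scale a = ann scale a)"
    by (simp add: reduced_def a_reduced_iff_Gamma_eq_ann)
  then show ?thesis
    unfolding smul_set_Gamma_eq_zero_iff ann_eq_ann_power_iff mod_iso_dl_carrier_iff
      mod_iso_Gamma_HomQ_iff short_exact_Gamma_iff
    by blast
qed

end
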